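(* Let $u_{\text{lb}},u_{\text{ub}}\in\mathbb{R}^{n_u}$ with $u_{\text{lb}}\le u_{\text{ub}}$ (componentwise) and let $\mathcal{U}=\{u\in\mathbb{R}^{n_u}\mid u_{\text{lb}}\le u\le u_{\text{ub}}\}$. Let $\mathcal{N}(x;\theta)$ be a ReLU network with $L$ hidden layers and parameters $\theta=\{(W_l,b_l)\}_{l=1}^{L+1}$. Define the network $\mathcal{N}_{\text{sat}}(x)\coloneqq\mathcal{N}(x;\theta_{\text{sat}})$ with $L+2$ hidden layers whose parameters $\theta_{\text{sat}}=\{(W_{l,\text{sat}},b_{l,\text{sat}})\}_{l=1}^{L+3}$ are $(W_{l,\text{sat}},b_{l,\text{sat}})=(W_l,b_l)$ for all $l\in\{1,\dots,L\}$, and $W_{L+1,\text{sat}}=-W_{L+1}$, $b_{L+1,\text{sat}}=u_{\text{ub}}-b_{L+1}$; $W_{L+2,\text{sat}}=-I$, $b_{L+2,\text{sat}}=u_{\text{ub}}-u_{\text{lb}}$; $W_{L+3,\text{sat}}=I$, $b_{L+3,\text{sat}}=u_{\text{lb}}$ (here $I$ is the $n_u\times n_u$ identity). Then $u_{\text{lb}}\le\mathcal{N}_{\text{sat}}(x)\le u_{\text{ub}}$ for all $x\in\mathbb{R}^{n_x}$, and for every $x\in\mathbb{R}^{n_x}$ with $u_{\text{lb}}\le\mathcal{N}(x;\theta)\le u_{\text{ub}}$ one has $\mathcal{N}_{\text{sat}}(x)=\mathcal{N}(x;\theta)$.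
   Context: A ReLU network with $L\ge 1$ hidden layers, input dimension $n_x$, output dimension $n_u$ and hidden widths $n_1,\dots,n_L$ is the map $\mathcal{N}(x;\theta)=W_{L+1}\xi_L+b_{L+1}$, where $\xi_0=x$ and $\xi_l=\max(0,W_l\xi_{l-1}+b_l)$ (maximum taken elementwise) for $l=1,\dots,L$; here $W_1\in\mathbb{R}^{n_1\times n_x}$, $W_l\in\mathbb{R}^{n_l\times n_{l-1}}$ for $2\le l\le L$, $W_{L+1}\in\mathbb{R}^{n_u\times n_L}$, $b_l\in\mathbb{R}^{n_l}$ for $l\le L$ and $b_{L+1}\in\mathbb{R}^{n_u}$. Inequalities between vectors are componentwise. *)

theory Defs
  imports "Jordan_Normal_Form.Matrix"
begin

text \<open>Vectors and matrices are Jordan_Normal_Form vectors/matrices, so that the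
  (layer-dependent) widths are carried by the values.\<close>

type_synonym params = "(real mat \<times> real vec) list"

definition relu :: "real vec \<Rightarrow> real vec" where
  "relu v = map_vec (\<lambda>a. max 0 a) v"

fun hidden :: "params \<Rightarrow> real vec \<Rightarrow> real vec" where
  "hidden [] \<xi> = \<xi>"
| "hidden ((W, b) # ps) \<xi> = hidden ps (relu (W *\<^sub>v \<xi> + b))"

definition net :: "params \<Rightarrow> real vec \<Rightarrow> real vec" where
  "net \<theta> x = (let \<xi> = hidden (butlast \<theta>) x; (W, b) = last \<theta> in W *\<^sub>v \<xi> + b)"

definition valid_net :: "nat \<Rightarrow> nat list \<Rightarrow> nat \<Rightarrow> params \<Rightarrow> bool" where
  "valid_net nx ns nu \<theta> \<longleftrightarrow>
     length ns \<ge> 1 \<and> length \<theta> = length ns + 1 \<and>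
     (let ds = nx # ns @ [nu] in
      \<forall>i < length \<theta>. fst (\<theta> ! i) \<in> carrier_mat (ds ! (i+1)) (ds ! i)
                    \<and> snd (\<theta> ! i) \<in> carrier_vec (ds ! (i+1)))"

definition sat_params :: "nat \<Rightarrow> params \<Rightarrow> real vec \<Rightarrow> real vec \<Rightarrow> params" where
  "sat_params nu \<theta> ulb uub =
     butlast \<theta> @
     [(- fst (last \<theta>), uub - snd (last \<theta>)),
      (- 1\<^sub>m nu, uub - ulb),
      (1\<^sub>m nu, ulb)]"

end

(* On each output coordinate the three appended layers map y = N(x; theta) to
   l + max 0 ((u - l) - max 0 (u - y)): the first layer yields max 0 (u - y),
   the second min (u - l) (max 0 (y - l)), and the last adds l back.  This is
   max l (min u y), so N_sat is N clamped to the box [l, u]; the clamp lies in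
   the box and fixes every value already inside it. *)
theory Submission
  imports Defs
begin

definition clamp :: "real vec \<Rightarrow> real vec \<Rightarrow> real vec \<Rightarrow> real vec" where
  "clamp l u y = vec (dim_vec y) (\<lambda>i. max (l $ i) (min (u $ i) (y $ i)))"

lemma clamp_between:
  assumes "l \<le> u" and "dim_vec y = dim_vec u"
  shows "l \<le> clamp l u y" and "clamp l u y \<le> u"
  using assms by (auto simp: clamp_def less_eq_vec_def)

lemma clamp_eq_self:
  assumes "l \<le> y" and "y \<le> u"
  shows "clamp l u y = y"
  using assms by (auto simp: clamp_def less_eq_vec_def)

lemma saturation_layers_eq_clamp_real:
  fixes l u y :: real
  shows "max 0 (- max 0 (u - y) + (u - l)) + l = max l (min u y)"
  by auto

lemma saturation_layers_eq_clamp: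
  assumes "y \<in> carrier_vec n" and "l \<in> carrier_vec n" and "u \<in> carrier_vec n"
  shows "1\<^sub>m n *\<^sub>v relu (- 1\<^sub>m n *\<^sub>v relu (u - y) + (u - l)) + l = clamp l u y"
proof -
  have "relu (u - y) \<in> carrier_vec n" and "relu (- relu (u - y) + (u - l)) \<in> carrier_vec n"
    using assms by (simp_all add: relu_def)
  then have "1\<^sub>m n *\<^sub>v relu (- 1\<^sub>m n *\<^sub>v relu (u - y) + (u - l)) + l
      = relu (- relu (u - y) + (u - l)) + l"
    by simp
  also have "\<dots> = clamp l u y"
  proof (rule eq_vecI)
    fix i assume "i < dim_vec (clamp l u y)"
    then show "(relu (- relu (u - y) + (u - l)) + l) $ i = clamp l u y $ i"
      using assms by (simp add: relu_def clamp_def saturation_layers_eq_clamp_real)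
  qed (use assms in \<open>simp add: relu_def clamp_def\<close>)
  finally show ?thesis .
qed

lemma hidden_append: "hidden (ps @ qs) x = hidden qs (hidden ps x)"
  by (induction ps arbitrary: x) auto

lemma net_snoc: "net (ps @ [(W, b)]) x = W *\<^sub>v hidden ps x + b"
  by (simp add: net_def)

lemma hidden_snoc_dim: "dim_vec (hidden (ps @ [(W, b)]) x) = dim_vec b"
  by (simp add: hidden_append relu_def)

definition params_fit :: "nat list \<Rightarrow> params \<Rightarrow> bool" where
  "params_fit ds \<theta> \<longleftrightarrow> length ds = length \<theta> + 1 \<and>
     (\<forall>i < length \<theta>. fst (\<theta> ! i) \<in> carrier_mat (ds ! (i + 1)) (ds ! i)
                    \<and> snd (\<theta> ! i) \<in> carrier_vec (ds ! (i + 1)))"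

lemma valid_net_iff_params_fit:
  "valid_net nx ns nu \<theta> \<longleftrightarrow> ns \<noteq> [] \<and> params_fit (nx # ns @ [nu]) \<theta>"
  by (auto simp: valid_net_def params_fit_def Let_def Suc_le_eq)

lemma params_fit_snoc:
  "params_fit (ds @ [d, d']) (\<theta> @ [(W, b)]) \<longleftrightarrow>
     params_fit (ds @ [d]) \<theta> \<and> W \<in> carrier_mat d' d \<and> b \<in> carrier_vec d'"
proof (cases "length ds = length \<theta>")
  case True
  have dims: "(ds @ [d, d']) ! j = (ds @ [d]) ! j" if "j \<le> length ds" for j
    using that by (cases "j < length ds") (simp_all add: nth_append)
  have layers: "(\<theta> @ [(W, b)]) ! i = \<theta> ! i" if "i < length \<theta>" for i
    using that by (simp add: nth_append)
  have split: "(\<forall>i < Suc (length \<theta>). P i) \<longleftrightarrow> (\<forall>i < length \<theta>. P i) \<and> P (length \<theta>)"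
    for P :: "nat \<Rightarrow> bool"
    by (auto simp: less_Suc_eq)
  show ?thesis
    unfolding params_fit_def length_append_singleton split
    using True by (simp add: dims layers nth_append)
next
  case False
  then show ?thesis
    by (simp add: params_fit_def)
qed

lemma valid_net_snocE:
  assumes "valid_net nx ns nu \<theta>"
  obtains ns' m \<theta>' W b where "ns = ns' @ [m]" and "\<theta> = \<theta>' @ [(W, b)]" and "\<theta>' \<noteq> []"
    and "params_fit (nx # ns' @ [m]) \<theta>'" and "W \<in> carrier_mat nu m" and "b \<in> carrier_vec nu"
proof -
  have "ns \<noteq> []" and fit: "params_fit (nx # ns @ [nu]) \<theta>"
    using assms by (simp_all add: valid_net_iff_params_fit)
  then obtain ns' m where ns: "ns = ns' @ [m]"
    by (metis rev_exhaust)
  have "\<theta> \<noteq> []"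
    using fit by (auto simp: params_fit_def)
  then obtain \<theta>' W b where \<theta>: "\<theta> = \<theta>' @ [(W, b)]"
    by (metis rev_exhaust surj_pair)
  have "params_fit ((nx # ns') @ [m, nu]) (\<theta>' @ [(W, b)])"
    using fit ns \<theta> by simp
  then have fit': "params_fit (nx # ns' @ [m]) \<theta>'" and "W \<in> carrier_mat nu m" "b \<in> carrier_vec nu"
    unfolding params_fit_snoc by simp_all
  moreover have "\<theta>' \<noteq> []"
    using fit' by (auto simp: params_fit_def)
  ultimately show ?thesis
    using that ns \<theta> by blast
qed

lemma hidden_carrier:
  assumes "params_fit (ds @ [d]) \<theta>" and "\<theta> \<noteq> []"
  shows "hidden \<theta> x \<in> carrier_vec d"
proof -
  obtain \<theta>' W b where \<theta>: "\<theta> = \<theta>' @ [(W, b)]"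
    using assms(2) by (metis rev_exhaust surj_pair)
  have "length ds = length \<theta>"
    using assms(1) by (simp add: params_fit_def)
  then obtain ds' d' where "ds = ds' @ [d']"
    using assms(2) by (metis length_0_conv rev_exhaust)
  then have "params_fit (ds' @ [d', d]) (\<theta>' @ [(W, b)])"
    using assms(1) \<theta> by simp
  then have "b \<in> carrier_vec d"
    by (simp add: params_fit_snoc)
  then show ?thesis
    unfolding \<theta> carrier_vec_def by (simp add: hidden_snoc_dim)
qed

lemma valid_net_sat_params:
  assumes "valid_net nx ns nu \<theta>" and "ulb \<in> carrier_vec nu" and "uub \<in> carrier_vec nu"
  shows "valid_net nx (ns @ [nu, nu]) nu (sat_params nu \<theta> ulb uub)"
proof -
  obtain ns' m \<theta>' W b where ns: "ns = ns' @ [m]" and \<theta>: "\<theta> = \<theta>' @ [(W, b)]"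
    and "params_fit (nx # ns' @ [m]) \<theta>'" and "W \<in> carrier_mat nu m" and "b \<in> carrier_vec nu"
    using assms(1) by (rule valid_net_snocE)
  then have "params_fit ((nx # ns') @ [m, nu, nu, nu])
      (\<theta>' @ [(- W, uub - b), (- 1\<^sub>m nu, uub - ulb), (1\<^sub>m nu, ulb)])"
    using assms(2,3)
      params_fit_snoc[of "nx # ns' @ [m, nu]" nu nu "\<theta>' @ [(- W, uub - b), (- 1\<^sub>m nu, uub - ulb)]"]
      params_fit_snoc[of "nx # ns' @ [m]" nu nu "\<theta>' @ [(- W, uub - b)]"]
      params_fit_snoc[of "nx # ns'" m nu \<theta>']
    by simp
  then show ?thesis
    by (simp add: valid_net_iff_params_fit sat_params_def ns \<theta>)
qed

lemma net_sat_params: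
  assumes "valid_net nx ns nu \<theta>" and "ulb \<in> carrier_vec nu" and "uub \<in> carrier_vec nu"
  shows "net (sat_params nu \<theta> ulb uub) x = clamp ulb uub (net \<theta> x)"
proof -
  obtain ns' m \<theta>' W b where \<theta>: "\<theta> = \<theta>' @ [(W, b)]" and "\<theta>' \<noteq> []"
    and "params_fit (nx # ns' @ [m]) \<theta>'" and W: "W \<in> carrier_mat nu m" and b: "b \<in> carrier_vec nu"
    using assms(1) by (rule valid_net_snocE)
  \<comment> \<open>Negation commutes with \<open>*\<^sub>v\<close> only for vectors of the matching dimension.\<close>
  then have \<xi>: "hidden \<theta>' x \<in> carrier_vec m"
    using hidden_carrier[of "nx # ns'" m \<theta>'] by simp
  have y: "net \<theta> x = W *\<^sub>v hidden \<theta>' x + b"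
    unfolding \<theta> by (rule net_snoc)
  have first_layer: "- W *\<^sub>v hidden \<theta>' x + (uub - b) = uub - net \<theta> x"
    unfolding y using W b \<xi> assms(3) by auto
  have "net (sat_params nu \<theta> ulb uub) x
      = 1\<^sub>m nu *\<^sub>v relu (- 1\<^sub>m nu *\<^sub>v relu (- W *\<^sub>v hidden \<theta>' x + (uub - b)) + (uub - ulb)) + ulb"
    by (simp add: sat_params_def \<theta> net_def hidden_append butlast_append)
  also have "\<dots> = clamp ulb uub (net \<theta> x)"
    unfolding first_layer using W b \<xi> assms(2,3) y
    by (intro saturation_layers_eq_clamp) auto
  finally show ?thesis .
qed

theorem proposition1:
  fixes nx nu :: nat and ns :: "nat list" and \<theta> :: params and ulb uub :: "real vec"
  assumes "valid_net nx ns nu \<theta>"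
    and "ulb \<in> carrier_vec nu" and "uub \<in> carrier_vec nu"
    and "ulb \<le> uub"
  shows "valid_net nx (ns @ [nu, nu]) nu (sat_params nu \<theta> ulb uub)
    \<and> (\<forall>x \<in> carrier_vec nx.
           ulb \<le> net (sat_params nu \<theta> ulb uub) x \<and> net (sat_params nu \<theta> ulb uub) x \<le> uub)
    \<and> (\<forall>x \<in> carrier_vec nx. ulb \<le> net \<theta> x \<and> net \<theta> x \<le> uub \<longrightarrow>
           net (sat_params nu \<theta> ulb uub) x = net \<theta> x)"
proof -
  have dim: "dim_vec (net \<theta> x) = dim_vec uub" for x
    using assms(1,3) by (elim valid_net_snocE) (simp add: net_snoc)
  have sat: "net (sat_params nu \<theta> ulb uub) x = clamp ulb uub (net \<theta> x)" for x
    using assms(1-3) by (rule net_sat_params)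
  show ?thesis
    unfolding sat
    using valid_net_sat_params[OF assms(1-3)] clamp_between[OF assms(4) dim] clamp_eq_self
    by blast
qed

end
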